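(* Let $n$ be a natural number with $2^k\le n<2^{k+1}$, and let $G$ be the graph with $n$ vertices obtained as the induced subgraph of the hypercube $Q_{k+1}$ on the vertices whose labels are the $(k+1)$-term binary representations of $0,1,\dots,n-1$. Then for any two vertices $u$ and $v$ of $G$, perfect state transfer from $u$ to $v$ is possible by at most two CQC-hoppings: either there is a spanning subgraph $H$ of $G$ and a time $t_0>0$ with $|\langle v|\exp(-it_0A(H))|u\rangle|=1$, or there exist a vertex $w$ of $G$, spanning subgraphs $H_1,H_2$ of $G$ and times $t_1,t_2>0$ with $|\langle w|\exp(-it_1A(H_1))|u\rangle|=1$ and $|\langle v|\exp(-it_2A(H_2))|w\rangle|=1$.
   Context: The hypercube $Q_m$ is the graph with vertex set $\{0,1\}^m$, two vertices being adjacent if and only if their labels have Hamming distance $1$. A spanning subgraph $H$ of $G$ has $V(H)=V(G)$ and $E(H)\subseteq E(G)$. For a graph $H$ with adjacency matrix $A(H)$, associate to each vertex $x$ the standard basis vector $|x\rangle\in\mathbb{C}^{|V(H)|}$; $H$ has perfect state transfer from $a$ to $b$ at time $t$ if $|\langle b|\exp(-itA(H))|a\rangle|=1$. A CQC-hopping from $a$ to $b$ on $G$ consists of switching off edges of $G$ to obtain a spanning subgraph $H$, performing perfect state transfer from $a$ to $b$ in $H$, and switching the removed edges back on. *)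

theory Defs
  imports Complex_Main "Jordan_Normal_Form.Matrix"
begin

definition hypercube_adj :: "nat \<Rightarrow> nat \<Rightarrow> nat \<Rightarrow> bool" where
  "hypercube_adj k x y \<longleftrightarrow> card {i. i < Suc k \<and> bit x i \<noteq> bit y i} = 1"

definition G_adj :: "nat \<Rightarrow> nat \<Rightarrow> nat \<Rightarrow> nat \<Rightarrow> bool" where
  "G_adj n k x y \<longleftrightarrow> x < n \<and> y < n \<and> hypercube_adj k x y"

definition spanning_subgraph :: "nat \<Rightarrow> nat \<Rightarrow> (nat \<Rightarrow> nat \<Rightarrow> bool) \<Rightarrow> bool" where
  "spanning_subgraph n k E \<longleftrightarrow> (\<forall>x y. E x y \<longrightarrow> G_adj n k x y) \<and> (\<forall>x y. E x y \<longrightarrow> E y x)"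

definition adj_matrix :: "nat \<Rightarrow> (nat \<Rightarrow> nat \<Rightarrow> bool) \<Rightarrow> complex mat" where
  "adj_matrix n E = mat n n (\<lambda>(i, j). if E i j then 1 else 0)"

definition mat_exp :: "complex mat \<Rightarrow> complex mat" where
  "mat_exp A = mat (dim_row A) (dim_col A) (\<lambda>(i, j). \<Sum>m. (A ^\<^sub>m m) $$ (i, j) / of_nat (fact m))"

definition pst :: "nat \<Rightarrow> (nat \<Rightarrow> nat \<Rightarrow> bool) \<Rightarrow> nat \<Rightarrow> nat \<Rightarrow> real \<Rightarrow> bool" where
  "pst n E a b t \<longleftrightarrow>
     cmod (mat_exp ((- (\<i> * complex_of_real t)) \<cdot>\<^sub>m adj_matrix n E) $$ (b, a)) = 1"

end

theory Submission
  imports Defs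
begin

text \<open>
  The vertex set {0, ..., n-1} is closed under clearing bits, so for every vertex m the
  submasks of m span a subcube Q_d of G, d being the number of one bits of m.  The characters
  of (Z/2)^d are eigenvectors of A(Q_d), and expanding a basis vector in them shows that
  exp(-i (pi/2) A(Q_d)) sends every vertex to its antipode with phase (-i)^d.  With m = u this
  transfers u to 0, and with m = v it transfers 0 to v, so two hops through the vertex 0 always
  suffice.
\<close>

unbundle bit_operations_syntax

lemma mat_power_eigenvector_entries:
  fixes B :: "'a::comm_semiring_1 mat"
  assumes B: "B \<in> carrier_mat n n" and x: "x < n"
    and eig: "\<And>x. x < n \<Longrightarrow> (\<Sum>y<n. B $$ (x, y) * \<phi> y) = \<mu> * \<phi> x"
  shows "(\<Sum>y<n. (B ^\<^sub>m m) $$ (x, y) * \<phi> y) = \<mu> ^ m * \<phi> x"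
  using x
proof (induction m arbitrary: x)
  case 0
  then show ?case
    using B by (simp add: if_distrib[where f = "\<lambda>c. c * _"] cong: if_cong)
next
  case (Suc m)
  have "(\<Sum>y<n. (B ^\<^sub>m Suc m) $$ (x, y) * \<phi> y)
      = (\<Sum>y<n. \<Sum>l<n. (B ^\<^sub>m m) $$ (x, l) * B $$ (l, y) * \<phi> y)"
    using B Suc.prems
    by (intro sum.cong) (simp_all add: scalar_prod_def atLeast0LessThan sum_distrib_right)
  also have "\<dots> = (\<Sum>l<n. (B ^\<^sub>m m) $$ (x, l) * (\<Sum>y<n. B $$ (l, y) * \<phi> y))"
    by (subst sum.swap) (simp add: sum_distrib_left mult.assoc)
  also have "\<dots> = \<mu> * (\<Sum>l<n. (B ^\<^sub>m m) $$ (x, l) * \<phi> l)"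
    using eig by (simp add: sum_distrib_left mult.left_commute)
  also have "\<dots> = \<mu> ^ Suc m * \<phi> x"
    using Suc by (simp add: mult.assoc)
  finally show ?case .
qed

lemma mat_exp_entry_eigen_expansion:
  fixes B :: "complex mat" and \<phi> :: "'t \<Rightarrow> nat \<Rightarrow> complex" and \<mu> :: "'t \<Rightarrow> complex"
  assumes B: "B \<in> carrier_mat n n" and "finite F" and u: "u < n" and v: "v < n"
    and eig: "\<And>T x. T \<in> F \<Longrightarrow> x < n \<Longrightarrow> (\<Sum>y<n. B $$ (x, y) * \<phi> T y) = \<mu> T * \<phi> T x"
    and unit: "\<And>y. y < n \<Longrightarrow> (\<Sum>T\<in>F. \<phi> T y) = (if y = u then 1 else 0)"
  shows "mat_exp B $$ (v, u) = (\<Sum>T\<in>F. exp (\<mu> T) * \<phi> T v)"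
proof -
  have power_entry: "(B ^\<^sub>m m) $$ (v, u) = (\<Sum>T\<in>F. \<mu> T ^ m * \<phi> T v)" for m
  proof -
    have "(B ^\<^sub>m m) $$ (v, u) = (\<Sum>y<n. (B ^\<^sub>m m) $$ (v, y) * (if y = u then 1 else 0))"
      using u by (simp add: if_distrib[where f = "\<lambda>c. _ * c"] cong: if_cong)
    also have "\<dots> = (\<Sum>y<n. (B ^\<^sub>m m) $$ (v, y) * (\<Sum>T\<in>F. \<phi> T y))"
      using unit by (intro sum.cong) simp_all
    also have "\<dots> = (\<Sum>T\<in>F. \<Sum>y<n. (B ^\<^sub>m m) $$ (v, y) * \<phi> T y)"
      by (simp add: sum_distrib_left sum.swap[where A = F])
    also have "\<dots> = (\<Sum>T\<in>F. \<mu> T ^ m * \<phi> T v)"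
      using mat_power_eigenvector_entries[OF B v eig] by simp
    finally show ?thesis .
  qed
  have "(\<lambda>m. \<phi> T v * (\<mu> T ^ m /\<^sub>R fact m)) sums (\<phi> T v * exp (\<mu> T))" for T
    by (intro sums_mult exp_converges)
  then have "(\<lambda>m. \<Sum>T\<in>F. \<mu> T ^ m * \<phi> T v / fact m) sums (\<Sum>T\<in>F. exp (\<mu> T) * \<phi> T v)"
    by (intro sums_sum) (simp add: scaleR_conv_of_real field_simps)
  then have "(\<lambda>m. (B ^\<^sub>m m) $$ (v, u) / fact m) sums (\<Sum>T\<in>F. exp (\<mu> T) * \<phi> T v)"
    by (simp add: power_entry sum_divide_distrib)
  then show ?thesis
    using B u v by (simp add: mat_exp_def sums_iff)
qed

lemma bit_imp_less_of_less_exp: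
  fixes x :: nat
  assumes "x < 2 ^ m" and "bit x j"
  shows "j < m"
  using assms by (metis bit_take_bit_iff take_bit_nat_eq_self_iff)

lemma finite_bits_nat:
  fixes m :: nat
  shows "finite {i. bit m i}"
proof (rule finite_subset)
  show "{i. bit m i} \<subseteq> {..<m}"
    using bit_imp_less_of_less_exp[of m m] less_exp[of m] by blast
qed simp

lemma bit_flip_bit_ne_iff:
  fixes x :: nat
  shows "bit x j \<noteq> bit (flip_bit i x) j \<longleftrightarrow> j = i"
  by (auto simp: bit_flip_bit_iff)

lemma inj_on_flip_bit:
  fixes x :: nat
  shows "inj_on (\<lambda>i. flip_bit i x) A"
  by (rule inj_onI) (metis bit_flip_bit_ne_iff)

definition submasks :: "nat \<Rightarrow> nat set" where
  "submasks m = {x. \<forall>j. bit x j \<longrightarrow> bit m j}"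

lemma submasks_le:
  assumes "x \<in> submasks m"
  shows "x \<le> m"
proof -
  have "x = x AND m"
    using assms by (intro bit_eqI) (auto simp: submasks_def bit_and_iff)
  then have "int x = int x AND int m"
    by (metis of_nat_and_eq)
  also have "\<dots> \<le> int m"
    by simp
  finally show ?thesis
    by simp
qed

lemma flip_bit_mem_submasks:
  assumes "x \<in> submasks m" and "bit m i"
  shows "flip_bit i x \<in> submasks m"
proof -
  have "bit m j" if "bit (flip_bit i x) j" for j
    using assms that bit_flip_bit_ne_iff[of x j i] by (cases "j = i") (auto simp: submasks_def)
  then show ?thesis
    by (simp add: submasks_def)
qed

lemma hypercube_adj_sym: "hypercube_adj k x y \<longleftrightarrow> hypercube_adj k y x"
proof -
  have "{i. i < Suc k \<and> bit x i \<noteq> bit y i} = {i. i < Suc k \<and> bit y i \<noteq> bit x i}"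
    by blast
  then show ?thesis
    by (simp only: hypercube_adj_def)
qed

lemma hypercube_adj_flip_bit:
  assumes "i \<le> k"
  shows "hypercube_adj k x (flip_bit i x)"
proof -
  have "{j. j < Suc k \<and> bit x j \<noteq> bit (flip_bit i x) j} = {i}"
    using assms by (auto simp only: bit_flip_bit_ne_iff)
  then show ?thesis
    by (simp add: hypercube_adj_def)
qed

lemma hypercube_adj_iff_flip_bit:
  assumes x: "x < 2 ^ Suc k" and y: "y < 2 ^ Suc k"
  shows "hypercube_adj k x y \<longleftrightarrow> (\<exists>i\<le>k. y = flip_bit i x)"
proof
  assume "hypercube_adj k x y"
  then obtain i where i: "{j. j < Suc k \<and> bit x j \<noteq> bit y j} = {i}"
    unfolding hypercube_adj_def by (rule card_1_singletonE)
  have differ: "bit x j \<noteq> bit y j \<longleftrightarrow> j = i" for j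
  proof (cases "j < Suc k")
    case True
    then show ?thesis
      using i by blast
  next
    case False
    then show ?thesis
      using i bit_imp_less_of_less_exp[OF x] bit_imp_less_of_less_exp[OF y] by blast
  qed
  have "i \<in> {j. j < Suc k \<and> bit x j \<noteq> bit y j}"
    unfolding i by simp
  then have "i \<le> k"
    by simp
  moreover have "y = flip_bit i x"
  proof (rule bit_eqI)
    fix j
    show "bit y j = bit (flip_bit i x) j"
      using differ[of j] bit_flip_bit_ne_iff[of x j i] by blast
  qed
  ultimately show "\<exists>i\<le>k. y = flip_bit i x"
    by blast
next
  assume "\<exists>i\<le>k. y = flip_bit i x"
  then show "hypercube_adj k x y"
    using hypercube_adj_flip_bit by blast
qed

definition subcube_adj :: "nat \<Rightarrow> nat \<Rightarrow> nat \<Rightarrow> nat \<Rightarrow> bool" where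
  "subcube_adj k m x y \<longleftrightarrow> x \<in> submasks m \<and> y \<in> submasks m \<and> hypercube_adj k x y"

lemma spanning_subgraph_subcube_adj:
  assumes "m < n"
  shows "spanning_subgraph n k (subcube_adj k m)"
proof -
  have "x < n" if "x \<in> submasks m" for x
    using submasks_le[OF that] assms by linarith
  then show ?thesis
    unfolding spanning_subgraph_def G_adj_def subcube_adj_def
    by (meson hypercube_adj_sym)
qed

lemma subcube_adj_neighbours:
  assumes m: "m < 2 ^ Suc k" and x: "x \<in> submasks m"
  shows "{y. subcube_adj k m x y} = (\<lambda>i. flip_bit i x) ` {i. bit m i}"
proof (intro equalityI subsetI)
  have small: "z < 2 ^ Suc k" if "z \<in> submasks m" for z
    using submasks_le[OF that] m by linarith
  fix y
  assume "y \<in> {y. subcube_adj k m x y}"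
  then have y: "y \<in> submasks m" and "hypercube_adj k x y"
    by (simp_all add: subcube_adj_def)
  then obtain i where i: "y = flip_bit i x"
    using hypercube_adj_iff_flip_bit[OF small[OF x] small[OF y]] by blast
  then have "bit x i \<or> bit y i"
    using bit_flip_bit_ne_iff[of x i i] by blast
  then have "bit m i"
    using x y by (auto simp: submasks_def)
  with i show "y \<in> (\<lambda>i. flip_bit i x) ` {i. bit m i}"
    by blast
next
  fix y
  assume "y \<in> (\<lambda>i. flip_bit i x) ` {i. bit m i}"
  then obtain i where i: "bit m i" and y: "y = flip_bit i x"
    by blast
  have "i \<le> k"
    using bit_imp_less_of_less_exp[OF m i] by simp
  then have "hypercube_adj k x y"
    using y hypercube_adj_flip_bit by blast
  moreover have "y \<in> submasks m"
    using y flip_bit_mem_submasks[OF x i] by blast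
  ultimately show "y \<in> {y. subcube_adj k m x y}"
    using x by (simp add: subcube_adj_def)
qed

definition cube_char :: "nat \<Rightarrow> nat set \<Rightarrow> nat \<Rightarrow> complex" where
  "cube_char a T x = (\<Prod>j\<in>T. if bit x j = bit a j then 1 else -1)"

lemma cube_char_flip_bit:
  assumes "finite T"
  shows "cube_char a T (flip_bit i x) = (if i \<in> T then -1 else 1) * cube_char a T x"
proof -
  let ?s = "\<lambda>y j. if bit y j = bit a j then 1 else -1 :: complex"
  have others: "(\<Prod>j\<in>T - {i}. ?s (flip_bit i x) j) = (\<Prod>j\<in>T - {i}. ?s x j)"
    using bit_flip_bit_ne_iff[of x _ i] by (intro prod.cong) auto
  have flipped: "?s (flip_bit i x) i = - ?s x i"
    using bit_flip_bit_ne_iff[of x i i] by auto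
  show ?thesis
  proof (cases "i \<in> T")
    case True
    then show ?thesis
      using assms others flipped by (simp add: cube_char_def prod.remove)
  next
    case False
    then show ?thesis
      using others by (simp add: cube_char_def)
  qed
qed

lemma sum_cube_char_Pow:
  assumes "finite S" and agree: "\<And>j. j \<notin> S \<Longrightarrow> bit x j = bit a j"
  shows "(\<Sum>T\<in>Pow S. cube_char a T x) = (if x = a then 2 ^ card S else 0)"
proof -
  have "(\<Sum>T\<in>Pow S. cube_char a T x) = (\<Prod>j\<in>S. (if bit x j = bit a j then 1 else -1) + 1)"
    using prod_add[OF assms(1), of "\<lambda>j. if bit x j = bit a j then 1 else -1" "\<lambda>_. 1", symmetric]
    by (simp add: cube_char_def)
  also have "\<dots> = (if x = a then 2 ^ card S else 0)"
  proof (cases "x = a")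
    case False
    then obtain j where j: "bit x j \<noteq> bit a j"
      using bit_eqI by blast
    then have "j \<in> S"
      using agree by blast
    with j False show ?thesis
      using \<open>finite S\<close> by (auto intro: prod_zero)
  qed simp
  finally show ?thesis .
qed

lemma subcube_adj_sum_cube_char:
  assumes m: "m < 2 ^ Suc k" and x: "x \<in> submasks m" and T: "T \<subseteq> {i. bit m i}"
  shows "(\<Sum>y | subcube_adj k m x y. cube_char a T y)
    = (\<Sum>i | bit m i. if i \<in> T then -1 else 1) * cube_char a T x"
proof -
  have "finite T"
    using T finite_bits_nat finite_subset by blast
  have "(\<Sum>y | subcube_adj k m x y. cube_char a T y) = (\<Sum>i | bit m i. cube_char a T (flip_bit i x))"
    by (simp add: subcube_adj_neighbours[OF m x] sum.reindex[OF inj_on_flip_bit])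
  also have "\<dots> = (\<Sum>i | bit m i. (if i \<in> T then -1 else 1) * cube_char a T x)"
    by (simp add: cube_char_flip_bit[OF \<open>finite T\<close>])
  finally show ?thesis
    by (simp add: sum_distrib_right)
qed

lemma sum_Pow_exp_sign_sum:
  fixes z :: complex
  assumes "finite S"
  shows "(\<Sum>T\<in>Pow S. exp (z * (\<Sum>j\<in>S. if j \<in> T then -1 else 1)) * (-1) ^ card T)
    = (exp z - exp (- z)) ^ card S"
proof -
  have "exp (z * (\<Sum>j\<in>S. if j \<in> T then -1 else 1)) * (-1) ^ card T
      = (\<Prod>j\<in>T. - exp (- z)) * (\<Prod>j\<in>S - T. exp z)" if "T \<subseteq> S" for T
  proof -
    have "exp (z * (\<Sum>j\<in>S. if j \<in> T then -1 else 1)) = (\<Prod>j\<in>S. exp (if j \<in> T then - z else z))"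
      using assms by (simp add: sum_distrib_left exp_sum if_distrib cong: if_cong)
    also have "\<dots> = (\<Prod>j\<in>S - T. exp (if j \<in> T then - z else z)) * (\<Prod>j\<in>T. exp (if j \<in> T then - z else z))"
      by (rule prod.subset_diff[OF that assms])
    also have "\<dots> = (\<Prod>j\<in>S - T. exp z) * (\<Prod>j\<in>T. exp (- z))"
      by (intro arg_cong2[where f = "(*)"] prod.cong) auto
    finally show ?thesis
      by (simp add: power_minus[of "exp (- z)"] mult_ac)
  qed
  then have "(\<Sum>T\<in>Pow S. exp (z * (\<Sum>j\<in>S. if j \<in> T then -1 else 1)) * (-1) ^ card T)
      = (\<Sum>T\<in>Pow S. (\<Prod>j\<in>T. - exp (- z)) * (\<Prod>j\<in>S - T. exp z))"
    by (intro sum.cong) auto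
  also have "\<dots> = (\<Prod>j\<in>S. - exp (- z) + exp z)"
    by (rule prod_add[OF assms, symmetric])
  finally show ?thesis
    by simp
qed

lemma pst_subcube_adj_antipodal:
  assumes mn: "m < n" and n: "n \<le> 2 ^ Suc k" and a: "a \<in> submasks m"
    and antipodal: "\<And>j. bit m j \<longleftrightarrow> bit a j \<noteq> bit b j"
  shows "pst n (subcube_adj k m) a b (pi / 2)"
proof -
  define S where "S = {j. bit m j}"
  define c where "c = - (\<i> * complex_of_real (pi / 2))"
  define B where "B = c \<cdot>\<^sub>m adj_matrix n (subcube_adj k m)"
  define \<phi> where "\<phi> T y = (if y \<in> submasks m then cube_char a T y else 0) / 2 ^ card S" for T y
  define \<mu> where "\<mu> T = c * (\<Sum>j\<in>S. if j \<in> T then -1 else 1)" for T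
  have m: "m < 2 ^ Suc k"
    using mn n by linarith
  have "finite S"
    unfolding S_def by (rule finite_bits_nat)
  have in_range: "y < n" if "y \<in> submasks m" for y
    using submasks_le[OF that] mn by linarith
  have b: "b \<in> submasks m"
    using a antipodal unfolding submasks_def by blast
  have B: "B \<in> carrier_mat n n"
    by (simp add: B_def adj_matrix_def)
  have eig: "(\<Sum>y<n. B $$ (x, y) * \<phi> T y) = \<mu> T * \<phi> T x" if T: "T \<in> Pow S" and x: "x < n" for T x
  proof -
    have neighbours_in_range: "{y \<in> {..<n}. subcube_adj k m x y} = {y. subcube_adj k m x y}"
      using in_range by (auto simp: subcube_adj_def)
    have "(\<Sum>y<n. B $$ (x, y) * \<phi> T y) = (\<Sum>y<n. if subcube_adj k m x y then c * \<phi> T y else 0)"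
      using x by (intro sum.cong) (simp_all add: B_def adj_matrix_def)
    also have "\<dots> = (\<Sum>y\<in>{y \<in> {..<n}. subcube_adj k m x y}. c * \<phi> T y)"
      by (rule sum.inter_filter[symmetric]) simp
    also have "\<dots> = c * (\<Sum>y | subcube_adj k m x y. \<phi> T y)"
      unfolding neighbours_in_range by (simp add: sum_distrib_left)
    also have "\<dots> = \<mu> T * \<phi> T x"
    proof (cases "x \<in> submasks m")
      case True
      have "(\<Sum>y | subcube_adj k m x y. \<phi> T y) = (\<Sum>y | subcube_adj k m x y. cube_char a T y) / 2 ^ card S"
        by (simp add: \<phi>_def subcube_adj_def sum_divide_distrib)
      then show ?thesis
        using True T subcube_adj_sum_cube_char[OF m True, of T a]
        by (simp add: \<mu>_def \<phi>_def S_def)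
    next
      case False
      then show ?thesis
        by (simp add: \<phi>_def subcube_adj_def)
    qed
    finally show ?thesis .
  qed
  have unit: "(\<Sum>T\<in>Pow S. \<phi> T y) = (if y = a then 1 else 0)" for y
  proof (cases "y \<in> submasks m")
    case True
    then have "bit y j = bit a j" if "j \<notin> S" for j
      using a that by (auto simp: S_def submasks_def)
    then show ?thesis
      using True by (simp add: \<phi>_def sum_divide_distrib[symmetric] sum_cube_char_Pow[OF \<open>finite S\<close>])
  next
    case False
    then show ?thesis
      using a by (auto simp: \<phi>_def)
  qed
  have char_b: "cube_char a T b = (-1) ^ card T" if "T \<in> Pow S" for T
  proof -
    have "cube_char a T b = (\<Prod>j\<in>T. -1)"
      unfolding cube_char_def using that antipodal by (intro prod.cong) (auto simp: S_def)
    then show ?thesis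
      by simp
  qed
  have "mat_exp B $$ (b, a) = (\<Sum>T\<in>Pow S. exp (\<mu> T) * \<phi> T b)"
    by (rule mat_exp_entry_eigen_expansion[OF B _ _ _ eig unit]) (use \<open>finite S\<close> a b in_range in auto)
  also have "\<dots> = (\<Sum>T\<in>Pow S. exp (\<mu> T) * (-1) ^ card T) / 2 ^ card S"
    using b char_b by (simp add: \<phi>_def sum_divide_distrib)
  also have "\<dots> = ((exp c - exp (- c)) / 2) ^ card S"
    using sum_Pow_exp_sign_sum[OF \<open>finite S\<close>, of c] by (simp add: \<mu>_def power_divide)
  also have "(exp c - exp (- c)) / 2 = - \<i>"
  proof -
    have "exp (\<i> * complex_of_real (pi / 2)) = \<i>"
      using cis_conv_exp[of "pi / 2"] by simp
    then show ?thesis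
      by (simp add: c_def exp_minus)
  qed
  finally show ?thesis
    by (simp add: pst_def B_def c_def norm_power)
qed

theorem mainTheorem7:
  fixes n k u v :: nat
  assumes "2 ^ k \<le> n" and "n < 2 ^ (k + 1)"
    and "u < n" and "v < n"
  shows "(\<exists>H t0. spanning_subgraph n k H \<and> t0 > 0 \<and> pst n H u v t0)
       \<or> (\<exists>w H1 H2 t1 t2. w < n \<and> spanning_subgraph n k H1 \<and> spanning_subgraph n k H2
            \<and> t1 > 0 \<and> t2 > 0 \<and> pst n H1 u w t1 \<and> pst n H2 w v t2)"
proof -
  have n: "n \<le> 2 ^ Suc k"
    using assms(2) by simp
  have "pst n (subcube_adj k u) u 0 (pi / 2)"
    by (rule pst_subcube_adj_antipodal[OF assms(3) n]) (simp_all add: submasks_def)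
  moreover have "pst n (subcube_adj k v) 0 v (pi / 2)"
    by (rule pst_subcube_adj_antipodal[OF assms(4) n]) (simp_all add: submasks_def)
  moreover have "spanning_subgraph n k (subcube_adj k u)" and "spanning_subgraph n k (subcube_adj k v)"
    using assms(3,4) by (simp_all add: spanning_subgraph_subcube_adj)
  moreover have "0 < n" and "pi / 2 > (0::real)"
    using assms(3) by simp_all
  ultimately show ?thesis
    by blast
qed

end
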